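(* Let $a,b,c\in\mathbb{H}^3$, and let $v_a\in T_a\mathbb{H}^3$ and $v_b\in T_b\mathbb{H}^3$ be unit vectors. Let $\mathcal A$ be the hyperbolic area of the geodesic triangle $(a,b,c)$. Then $$\left\|\Gamma_a^bv_a-v_b\right\|_{T_b\mathbb{H}^3}\le\mathcal A+\left\|\Gamma_a^cv_a-\Gamma_b^cv_b\right\|_{T_c\mathbb{H}^3}.$$
   Context: $\Gamma_p^qv\in T_q\mathbb{H}^3$ denotes the parallel transport of $v\in T_p\mathbb{H}^3$ along the geodesic segment of $\mathbb{H}^3$ from $p$ to $q$. *)

theory Defs
  imports "HOL-Analysis.Analysis"
begin

text \<open>Hyperboloid model of hyperbolic 3-space inside Minkowski space
  R^{1,3}, represented as real \<times> real^3 (time coordinate first).\<close>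

type_synonym mpt = "real \<times> (real ^ 3)"

definition mink :: "mpt \<Rightarrow> mpt \<Rightarrow> real" where
  "mink p q = - (fst p * fst q) + snd p \<bullet> snd q"

definition hyp3 :: "mpt set" where
  "hyp3 = {p. mink p p = -1 \<and> fst p > 0}"

definition tangent :: "mpt \<Rightarrow> mpt set" where
  "tangent p = {v. mink p v = 0}"

definition lnorm :: "mpt \<Rightarrow> real" where
  "lnorm v = sqrt (mink v v)"

definition ptrans :: "mpt \<Rightarrow> mpt \<Rightarrow> mpt \<Rightarrow> mpt" where
  "ptrans p q v = v + (mink q v / (1 - mink p q)) *\<^sub>R (p + q)"

text \<open>Unit initial tangent vector at p of the geodesic from p to q (p \<noteq> q).\<close>
definition gdir :: "mpt \<Rightarrow> mpt \<Rightarrow> mpt" where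
  "gdir p q = (let w = q + mink p q *\<^sub>R p in (1 / lnorm w) *\<^sub>R w)"

definition angle_at :: "mpt \<Rightarrow> mpt \<Rightarrow> mpt \<Rightarrow> real" where
  "angle_at p q r = arccos (mink (gdir p q) (gdir p r))"

text \<open>Hyperbolic area of the geodesic triangle (a,b,c) (Gauss--Bonnet: angle defect;
  0 for triangles with coinciding vertices).\<close>
definition tri_area :: "mpt \<Rightarrow> mpt \<Rightarrow> mpt \<Rightarrow> real" where
  "tri_area a b c =
     (if a = b \<or> b = c \<or> a = c then 0
      else pi - (angle_at a b c + angle_at b c a + angle_at c a b))"

end

theory Submission
  imports Defs
begin

text \<open>Parallel transport is a linear isometry between tangent spaces and \<open>\<Gamma>\<^sub>b\<^sup>c\<close> inverts
  \<open>\<Gamma>\<^sub>c\<^sup>b\<close>, so by the triangle inequality in \<open>T\<^sub>bH\<^sup>3\<close> it suffices to bound the holonomy defect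
  \<open>|\<Gamma>\<^sub>a\<^sup>b v - \<Gamma>\<^sub>c\<^sup>b \<Gamma>\<^sub>a\<^sup>c v|\<close> of a unit vector by the area \<open>A\<close>. Write \<open>x, y, z\<close> for the
  hyperbolic cosines of the side lengths, \<open>P = (1 + x)(1 + y)(1 + z)\<close> and \<open>D\<close> for minus the Gram
  determinant of the vertices. An explicit computation in the hyperboloid model gives
  \<open>|\<Gamma>\<^sub>a\<^sup>b v - \<Gamma>\<^sub>c\<^sup>b \<Gamma>\<^sub>a\<^sup>c v|\<^sup>2 = 2 Q(v) / P\<close> for a quadratic form \<open>Q\<close> with \<open>Q(v) \<le> D\<close> (a Gram
  inequality in \<open>T\<^sub>aH\<^sup>3\<close>), while the hyperbolic law of cosines gives \<open>cos A = 1 - D / P\<close>. Hence the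
  squared defect is at most \<open>2 (1 - cos A) \<le> A\<^sup>2\<close>.\<close>

lemma mink_commute: "mink p q = mink q p"
  by (simp add: mink_def inner_commute)

lemma mink_add_left [simp]: "mink (u + v) w = mink u w + mink v w"
  unfolding mink_def by (simp add: inner_add_left algebra_simps)

lemma mink_add_right [simp]: "mink w (u + v) = mink w u + mink w v"
  unfolding mink_def by (simp add: inner_add_right algebra_simps)

lemma mink_diff_left [simp]: "mink (u - v) w = mink u w - mink v w"
  unfolding mink_def by (simp add: inner_diff_left algebra_simps)

lemma mink_diff_right [simp]: "mink w (u - v) = mink w u - mink w v"
  unfolding mink_def by (simp add: inner_diff_right algebra_simps)

lemma mink_scaleR_left [simp]: "mink (r *\<^sub>R u) w = r * mink u w"
  unfolding mink_def by (simp add: algebra_simps)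

lemma mink_scaleR_right [simp]: "mink w (r *\<^sub>R u) = r * mink w u"
  unfolding mink_def by (simp add: algebra_simps)

lemma mink_zero_left [simp]: "mink 0 w = 0"
  and mink_zero_right [simp]: "mink w 0 = 0"
  unfolding mink_def by simp_all

lemma mink_orth_timelike:
  assumes "mink t t < 0" and "mink t v = 0"
  shows "0 \<le> mink v v" and "mink v v = 0 \<Longrightarrow> v = 0"
proof -
  obtain t0 T v0 V where t: "t = (t0, T)" and v: "v = (v0, V)" by fastforce
  have gap: "0 < t0\<^sup>2 - T \<bullet> T" using assms(1) by (simp add: mink_def t power2_eq_square)
  have orth: "t0 * v0 = T \<bullet> V" using assms(2) by (simp add: mink_def t v)
  have "(V \<bullet> V) * (t0\<^sup>2 - T \<bullet> T) \<le> t0\<^sup>2 * (V \<bullet> V) - (T \<bullet> V)\<^sup>2"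
    using Cauchy_Schwarz_ineq[of T V] by (simp add: algebra_simps)
  also have "\<dots> = t0\<^sup>2 * mink v v"
    by (simp add: mink_def v orth[symmetric] power2_eq_square algebra_simps)
  finally have key: "(V \<bullet> V) * (t0\<^sup>2 - T \<bullet> T) \<le> t0\<^sup>2 * mink v v" .
  have "0 < t0\<^sup>2" using gap inner_ge_zero[of T] by linarith
  moreover have "0 \<le> t0\<^sup>2 * mink v v"
    using key mult_nonneg_nonneg[OF inner_ge_zero[of V] less_imp_le[OF gap]] by linarith
  ultimately show "0 \<le> mink v v" by (simp add: zero_le_mult_iff)
  show "v = 0" if "mink v v = 0"
  proof -
    have "V \<bullet> V \<le> 0" using key gap that by (simp add: mult_le_0_iff)
    then have "V \<bullet> V = 0" using inner_ge_zero[of V] by linarith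
    then have "V = 0" by simp
    moreover from this have "v0 = 0" using orth \<open>0 < t0\<^sup>2\<close> by simp
    ultimately show "v = 0" by (simp add: v zero_prod_def)
  qed
qed

lemma hyp3_mink_self: "p \<in> hyp3 \<Longrightarrow> mink p p = -1"
  by (simp add: hyp3_def)

definition tangent_proj :: "mpt \<Rightarrow> mpt \<Rightarrow> mpt" where
  "tangent_proj p q = q + mink p q *\<^sub>R p"

lemma tangent_proj_tangent: "p \<in> hyp3 \<Longrightarrow> tangent_proj p q \<in> tangent p"
  by (simp add: tangent_proj_def tangent_def hyp3_mink_self)

lemma mink_tangent_proj:
  "p \<in> hyp3 \<Longrightarrow> mink (tangent_proj p q) (tangent_proj p r) = mink q r + mink p q * mink p r"
  by (simp add: tangent_proj_def hyp3_mink_self mink_commute[of q p] mink_commute[of r p] algebra_simps)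

lemma tangent_mink_nonneg: "p \<in> hyp3 \<Longrightarrow> v \<in> tangent p \<Longrightarrow> 0 \<le> mink v v"
  and tangent_mink_self_eq_0: "p \<in> hyp3 \<Longrightarrow> v \<in> tangent p \<Longrightarrow> mink v v = 0 \<Longrightarrow> v = 0"
  using mink_orth_timelike[of p v] by (simp_all add: hyp3_def tangent_def)

lemma hyp3_mink_le:
  assumes "p \<in> hyp3" and "q \<in> hyp3"
  shows "mink p q \<le> -1"
proof -
  obtain p0 P q0 Q where p: "p = (p0, P)" and q: "q = (q0, Q)" by fastforce
  have "p0 * p0 = 1 + P \<bullet> P" "0 < p0" and "q0 * q0 = 1 + Q \<bullet> Q" "0 < q0"
    using assms by (auto simp: hyp3_def mink_def p q)
  then have "p0\<^sup>2 = 1 + (norm P)\<^sup>2" and "q0\<^sup>2 = 1 + (norm Q)\<^sup>2"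
    by (simp_all add: dot_square_norm power2_eq_square[of p0] power2_eq_square[of q0])
  moreover have "(1 + norm P * norm Q)\<^sup>2 \<le> (1 + norm P ^ 2) * (1 + norm Q ^ 2)"
    using zero_le_power2[of "norm P - norm Q"] by (simp add: power2_eq_square algebra_simps)
  ultimately have "(1 + norm P * norm Q)\<^sup>2 \<le> (p0 * q0)\<^sup>2"
    by (simp add: power_mult_distrib)
  then have "1 + norm P * norm Q \<le> p0 * q0"
    by (rule power2_le_imp_le) (use \<open>0 < p0\<close> \<open>0 < q0\<close> in simp)
  then show ?thesis using norm_cauchy_schwarz[of P Q] by (simp add: mink_def p q)
qed

lemma hyp3_mink_less:
  assumes "p \<in> hyp3" and "q \<in> hyp3" and "p \<noteq> q"
  shows "mink p q < -1"
proof (rule ccontr)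
  assume "\<not> mink p q < -1"
  then have "mink p q = -1" using hyp3_mink_le[OF assms(1,2)] by simp
  then have "mink (tangent_proj p q) (tangent_proj p q) = 0"
    using assms(2) by (simp add: mink_tangent_proj[OF assms(1)] hyp3_mink_self)
  then have "tangent_proj p q = 0"
    using tangent_mink_self_eq_0[OF assms(1) tangent_proj_tangent[OF assms(1)]] by blast
  then have "q - p = 0" by (simp add: tangent_proj_def \<open>mink p q = -1\<close>)
  with assms(3) show False by simp
qed

lemma tangent_diff: "u \<in> tangent p \<Longrightarrow> v \<in> tangent p \<Longrightarrow> u - v \<in> tangent p"
  and tangent_scaleR: "v \<in> tangent p \<Longrightarrow> r *\<^sub>R v \<in> tangent p"
  by (simp_all add: tangent_def)

lemma tangent_mink_cauchy_schwarz:
  assumes "p \<in> hyp3" and "u \<in> tangent p" and "v \<in> tangent p"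
  shows "(mink u v)\<^sup>2 \<le> mink u u * mink v v"
proof (cases "v = 0")
  case False
  then have "0 < mink v v"
    using tangent_mink_nonneg[OF assms(1,3)] tangent_mink_self_eq_0[OF assms(1,3)] by fastforce
  moreover have "0 \<le> mink (mink v v *\<^sub>R u - mink u v *\<^sub>R v) (mink v v *\<^sub>R u - mink u v *\<^sub>R v)"
    using assms by (intro tangent_mink_nonneg tangent_diff tangent_scaleR)
  then have "0 \<le> mink v v * (mink u u * mink v v - (mink u v)\<^sup>2)"
    by (simp add: mink_commute[of v u] power2_eq_square algebra_simps)
  ultimately show ?thesis by (simp add: zero_le_mult_iff)
qed simp

lemma tangent_gram_det_nonneg:
  assumes "p \<in> hyp3" and "u \<in> tangent p" and "v \<in> tangent p" and "w \<in> tangent p"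
  shows "0 \<le> mink u u * mink v v * mink w w + 2 * mink u v * mink v w * mink w u
    - mink u u * (mink v w)\<^sup>2 - mink v v * (mink w u)\<^sup>2 - mink w w * (mink u v)\<^sup>2"
    (is "0 \<le> ?det")
proof (cases "u = 0")
  case False
  define s where "s = mink u u"
  have "0 < s"
    using tangent_mink_nonneg[OF assms(1,2)] tangent_mink_self_eq_0[OF assms(1,2)] False
    by (fastforce simp: s_def)
  define e where "e = s *\<^sub>R v - mink u v *\<^sub>R u"
  define f where "f = s *\<^sub>R w - mink u w *\<^sub>R u"
  define X where "X = s * mink v w - mink u v * mink u w"
  define Y where "Y = s * mink v v - (mink u v)\<^sup>2"
  define Z where "Z = s * mink w w - (mink u w)\<^sup>2"
  have "mink e f = s * X" "mink e e = s * Y" "mink f f = s * Z"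
    unfolding e_def f_def X_def Y_def Z_def s_def
    by (simp_all add: mink_commute[of v u] mink_commute[of w u] mink_commute[of w v]
        power2_eq_square algebra_simps)
  moreover have "(mink e f)\<^sup>2 \<le> mink e e * mink f f"
    using assms unfolding e_def f_def
    by (intro tangent_mink_cauchy_schwarz tangent_diff tangent_scaleR)
  ultimately have "X\<^sup>2 \<le> Y * Z"
    using \<open>0 < s\<close> by (simp add: power_mult_distrib power2_eq_square)
  moreover have "s * ?det = Y * Z - X\<^sup>2"
    unfolding X_def Y_def Z_def s_def
    by (simp add: mink_commute[of w u] power2_eq_square algebra_simps)
  ultimately have "0 \<le> s * ?det" by simp
  then show ?thesis using \<open>0 < s\<close> by (simp add: zero_le_mult_iff)
qed simp

lemma lnorm_triangle:
  assumes "p \<in> hyp3" and "u \<in> tangent p" and "v \<in> tangent p"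
  shows "lnorm (u + v) \<le> lnorm u + lnorm v"
proof -
  have uu: "0 \<le> mink u u" and vv: "0 \<le> mink v v"
    using assms tangent_mink_nonneg by blast+
  have "mink u v \<le> sqrt (mink u u * mink v v)"
    using tangent_mink_cauchy_schwarz[OF assms] real_le_rsqrt by (metis abs_le_D1 power2_abs)
  then have "mink (u + v) (u + v) \<le> (lnorm u + lnorm v)\<^sup>2"
    using uu vv by (simp add: lnorm_def mink_commute[of v u] real_sqrt_mult power2_eq_square algebra_simps)
  then show ?thesis
    using uu vv by (simp add: lnorm_def real_sqrt_le_iff real_le_lsqrt)
qed

lemma ptrans_diff: "ptrans p q (u - v) = ptrans p q u - ptrans p q v"
  by (simp add: ptrans_def diff_divide_distrib scaleR_diff_left)

lemma two_le_one_minus_mink: "p \<in> hyp3 \<Longrightarrow> q \<in> hyp3 \<Longrightarrow> 2 \<le> 1 - mink p q"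
  using hyp3_mink_le by fastforce

lemma ptrans_eq_add_scaleR:
  assumes "p \<in> hyp3" and "q \<in> hyp3"
  obtains k where "ptrans p q v = v + k *\<^sub>R (p + q)" and "mink q v = k * (1 - mink p q)"
proof
  show "ptrans p q v = v + (mink q v / (1 - mink p q)) *\<^sub>R (p + q)"
    by (simp add: ptrans_def)
  show "mink q v = mink q v / (1 - mink p q) * (1 - mink p q)"
    using two_le_one_minus_mink[OF assms] by simp
qed

lemma ptrans_tangent:
  assumes "p \<in> hyp3" and "q \<in> hyp3"
  shows "ptrans p q v \<in> tangent q"
proof -
  obtain k where "ptrans p q v = v + k *\<^sub>R (p + q)" and "mink q v = k * (1 - mink p q)"
    using ptrans_eq_add_scaleR[OF assms] .
  moreover have "mink q q = -1" using assms(2) by (rule hyp3_mink_self)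
  ultimately show ?thesis by (simp add: tangent_def mink_commute[of q p] algebra_simps)
qed

lemma mink_ptrans:
  assumes "p \<in> hyp3" and "q \<in> hyp3" and "u \<in> tangent p" and "v \<in> tangent p"
  shows "mink (ptrans p q u) (ptrans p q v) = mink u v"
proof -
  obtain k where ku: "ptrans p q u = u + k *\<^sub>R (p + q)" "mink q u = k * (1 - mink p q)"
    using ptrans_eq_add_scaleR[OF assms(1,2)] .
  obtain l where lv: "ptrans p q v = v + l *\<^sub>R (p + q)" "mink q v = l * (1 - mink p q)"
    using ptrans_eq_add_scaleR[OF assms(1,2)] .
  have "mink p p = -1" "mink q q = -1" "mink p u = 0" "mink p v = 0"
    using assms by (simp_all add: hyp3_mink_self tangent_def)
  then have "mink (ptrans p q u) (ptrans p q v)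
      = mink u v + l * mink q u + k * mink q v - 2 * k * l * (1 - mink p q)"
    unfolding ku(1) lv(1)
    by (simp add: mink_commute[of u p] mink_commute[of u q] mink_commute[of q p] algebra_simps)
  also have "\<dots> = mink u v"
    unfolding ku(2) lv(2) by (simp add: algebra_simps)
  finally show ?thesis .
qed

lemma ptrans_self: "v \<in> tangent p \<Longrightarrow> ptrans p p v = v"
  by (simp add: ptrans_def tangent_def)

lemma ptrans_ptrans:
  assumes "p \<in> hyp3" and "q \<in> hyp3" and "v \<in> tangent p"
  shows "ptrans q p (ptrans p q v) = v"
proof -
  obtain k where k: "ptrans p q v = v + k *\<^sub>R (p + q)" "mink q v = k * (1 - mink p q)"
    using ptrans_eq_add_scaleR[OF assms(1,2)] .
  have "1 - mink q p \<noteq> 0" using two_le_one_minus_mink[OF assms(2,1)] by simp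
  moreover have "mink p p = -1" "mink p v = 0"
    using assms by (simp_all add: hyp3_mink_self tangent_def)
  ultimately have "mink p (ptrans p q v) / (1 - mink q p) = - k"
    using k by (simp add: mink_commute[of q p] field_simps)
  then show ?thesis
    by (simp add: ptrans_def[of q p] k(1) algebra_simps)
qed

text \<open>For a triangle \<open>a, b, c\<close> in \<open>hyp3\<close> with \<open>x = - mink b c\<close>, \<open>y = - mink a c\<close>, \<open>z = - mink a b\<close>
  (the hyperbolic cosines of its sides), \<open>tri_gram x y z\<close> is minus the Gram determinant of
  \<open>a, b, c\<close>, and \<open>opposite_angle x y z\<close> is the angle at \<open>a\<close> by the hyperbolic law of cosines.\<close>

definition tri_gram :: "real \<Rightarrow> real \<Rightarrow> real \<Rightarrow> real" where
  "tri_gram x y z = 1 + 2 * x * y * z - x\<^sup>2 - y\<^sup>2 - z\<^sup>2"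

definition opposite_angle :: "real \<Rightarrow> real \<Rightarrow> real \<Rightarrow> real" where
  "opposite_angle x y z = arccos ((y * z - x) / (sqrt (y\<^sup>2 - 1) * sqrt (z\<^sup>2 - 1)))"

lemma tri_gram_rotate: "tri_gram y z x = tri_gram x y z"
  by (simp add: tri_gram_def algebra_simps)

lemma cosh_law_square: "(y * z - x)\<^sup>2 + tri_gram x y z = (y\<^sup>2 - 1) * (z\<^sup>2 - 1)"
  by (simp add: tri_gram_def power2_eq_square algebra_simps)

lemma cosh_law_bounds:
  assumes "1 < y" and "1 < z" and "0 \<le> tri_gram x y z"
  shows "-1 \<le> (y * z - x) / (sqrt (y\<^sup>2 - 1) * sqrt (z\<^sup>2 - 1))"
    and "(y * z - x) / (sqrt (y\<^sup>2 - 1) * sqrt (z\<^sup>2 - 1)) \<le> 1"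
proof -
  have pos: "0 < sqrt (y\<^sup>2 - 1) * sqrt (z\<^sup>2 - 1)" using assms by simp
  have "(y * z - x)\<^sup>2 \<le> (sqrt (y\<^sup>2 - 1) * sqrt (z\<^sup>2 - 1))\<^sup>2"
    using cosh_law_square[of y z x] assms by (simp add: power_mult_distrib)
  then have "\<bar>y * z - x\<bar> \<le> sqrt (y\<^sup>2 - 1) * sqrt (z\<^sup>2 - 1)"
    using pos by (simp add: power2_le_iff_abs_le)
  then show "-1 \<le> (y * z - x) / (sqrt (y\<^sup>2 - 1) * sqrt (z\<^sup>2 - 1))"
    and "(y * z - x) / (sqrt (y\<^sup>2 - 1) * sqrt (z\<^sup>2 - 1)) \<le> 1"
    using pos by (simp_all add: abs_le_iff le_divide_eq divide_le_eq)
qed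

lemma cos_opposite_angle:
  assumes "1 < y" and "1 < z" and "0 \<le> tri_gram x y z"
  shows "cos (opposite_angle x y z) = (y * z - x) / (sqrt (y\<^sup>2 - 1) * sqrt (z\<^sup>2 - 1))"
  using cosh_law_bounds[OF assms] by (simp add: opposite_angle_def)

lemma opposite_angle_bounds:
  assumes "1 < y" and "1 < z" and "0 \<le> tri_gram x y z"
  shows "0 \<le> opposite_angle x y z" and "opposite_angle x y z \<le> pi"
  using cosh_law_bounds[OF assms] by (simp_all add: opposite_angle_def arccos_lbound arccos_ubound)

lemma sin_opposite_angle:
  assumes "1 < y" and "1 < z" and "0 \<le> tri_gram x y z"
  shows "sin (opposite_angle x y z) = sqrt (tri_gram x y z) / (sqrt (y\<^sup>2 - 1) * sqrt (z\<^sup>2 - 1))"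
proof -
  have pos: "0 < y\<^sup>2 - 1" "0 < z\<^sup>2 - 1" using assms by simp_all
  have "((y * z - x) / (sqrt (y\<^sup>2 - 1) * sqrt (z\<^sup>2 - 1)))\<^sup>2
      = ((y\<^sup>2 - 1) * (z\<^sup>2 - 1) - tri_gram x y z) / ((y\<^sup>2 - 1) * (z\<^sup>2 - 1))"
    using pos cosh_law_square[of y z x] by (simp add: power_divide power_mult_distrib)
  then have "1 - ((y * z - x) / (sqrt (y\<^sup>2 - 1) * sqrt (z\<^sup>2 - 1)))\<^sup>2
      = tri_gram x y z / ((y\<^sup>2 - 1) * (z\<^sup>2 - 1))"
    using pos by (simp add: diff_divide_distrib)
  then show ?thesis
    using cosh_law_bounds[OF assms] pos
    by (simp add: opposite_angle_def sin_arccos real_sqrt_divide real_sqrt_mult)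
qed

lemma cos_sin_opposite_angles:
  assumes x: "1 < x" and y: "1 < y" and z: "1 < z" and D: "0 \<le> tri_gram x y z"
  shows "cos (opposite_angle x y z) = (y * z - x) / (sqrt (y\<^sup>2 - 1) * sqrt (z\<^sup>2 - 1))"
    and "sin (opposite_angle x y z) = sqrt (tri_gram x y z) / (sqrt (y\<^sup>2 - 1) * sqrt (z\<^sup>2 - 1))"
    and "cos (opposite_angle y z x) = (z * x - y) / (sqrt (z\<^sup>2 - 1) * sqrt (x\<^sup>2 - 1))"
    and "sin (opposite_angle y z x) = sqrt (tri_gram x y z) / (sqrt (z\<^sup>2 - 1) * sqrt (x\<^sup>2 - 1))"
    and "cos (opposite_angle z x y) = (x * y - z) / (sqrt (x\<^sup>2 - 1) * sqrt (y\<^sup>2 - 1))"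
    and "sin (opposite_angle z x y) = sqrt (tri_gram x y z) / (sqrt (x\<^sup>2 - 1) * sqrt (y\<^sup>2 - 1))"
  using cos_opposite_angle[OF y z D] sin_opposite_angle[OF y z D]
    cos_opposite_angle[OF z x] sin_opposite_angle[OF z x]
    cos_opposite_angle[OF x y] sin_opposite_angle[OF x y] D
  by (simp_all add: tri_gram_rotate)

lemma cos_angle_defect:
  assumes x: "1 < x" and y: "1 < y" and z: "1 < z" and D: "0 \<le> tri_gram x y z"
  shows "cos (pi - (opposite_angle x y z + opposite_angle y z x + opposite_angle z x y))
    = 1 - tri_gram x y z / ((1 + x) * (1 + y) * (1 + z))"
proof -
  define qx qy qz r
    where "qx = sqrt (x\<^sup>2 - 1)" and "qy = sqrt (y\<^sup>2 - 1)" and "qz = sqrt (z\<^sup>2 - 1)"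
      and "r = sqrt (tri_gram x y z)"
  have sq: "qx\<^sup>2 = x\<^sup>2 - 1" "qy\<^sup>2 = y\<^sup>2 - 1" "qz\<^sup>2 = z\<^sup>2 - 1" "r\<^sup>2 = tri_gram x y z"
    and pos: "0 < qx" "0 < qy" "0 < qz"
    using x y z D by (simp_all add: qx_def qy_def qz_def r_def)
  note angles = cos_sin_opposite_angles[OF x y z D, folded qx_def qy_def qz_def r_def]
  have "cos (opposite_angle x y z + opposite_angle y z x + opposite_angle z x y)
    = ((y * z - x) * (z * x - y) * (x * y - z) - r\<^sup>2 * ((y * z - x) + (z * x - y) + (x * y - z)))
      / (qx\<^sup>2 * qy\<^sup>2 * qz\<^sup>2)"
    unfolding cos_add sin_add angles using pos
    by (simp add: field_simps) (simp add: power2_eq_square algebra_simps)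
  also have "\<dots> = tri_gram x y z / ((1 + x) * (1 + y) * (1 + z)) - 1"
  proof -
    define P M where "P = (1 + x) * (1 + y) * (1 + z)" and "M = (x - 1) * (y - 1) * (z - 1)"
    have "0 < P" "0 < M" using x y z by (simp_all add: P_def M_def)
    moreover have den: "qx\<^sup>2 * qy\<^sup>2 * qz\<^sup>2 = P * M"
      unfolding sq P_def M_def by (simp add: power2_eq_square algebra_simps)
    moreover have num: "(y * z - x) * (z * x - y) * (x * y - z)
        - r\<^sup>2 * ((y * z - x) + (z * x - y) + (x * y - z)) = (tri_gram x y z - P) * M"
      unfolding sq P_def M_def tri_gram_def by (simp add: power2_eq_square algebra_simps)
    ultimately show ?thesis unfolding den num P_def[symmetric] by (simp add: field_simps)
  qed
  finally show ?thesis by simp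
qed

lemma cosh_law_numerators_add_nonneg:
  assumes x: "1 < x" and y: "1 < y" and z: "1 < z" and D: "0 \<le> tri_gram x y z"
  shows "0 \<le> (y * z - x) * sqrt (x\<^sup>2 - 1) + (z * x - y) * sqrt (y\<^sup>2 - 1)"
proof -
  define qx qy where "qx = sqrt (x\<^sup>2 - 1)" and "qy = sqrt (y\<^sup>2 - 1)"
  define A B where "A = y * z - x" and "B = z * x - y"
  have sq: "qx\<^sup>2 = x\<^sup>2 - 1" "qy\<^sup>2 = y\<^sup>2 - 1" and pos: "0 < qx" "0 < qy"
    using x y by (simp_all add: qx_def qy_def)
  have A2: "A\<^sup>2 = (y\<^sup>2 - 1) * (z\<^sup>2 - 1) - tri_gram x y z"
    and B2: "B\<^sup>2 = (z\<^sup>2 - 1) * (x\<^sup>2 - 1) - tri_gram x y z"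
    using cosh_law_square[of y z x] cosh_law_square[of z x y]
    by (simp_all add: A_def B_def tri_gram_rotate)
  have squares: "(B * qy)\<^sup>2 - (A * qx)\<^sup>2 = tri_gram x y z * (x\<^sup>2 - y\<^sup>2)"
    unfolding power_mult_distrib A2 B2 sq by (simp add: algebra_simps)
  have "y < y * z" "x < z * x"
    using mult_strict_left_mono[of 1 z y] mult_strict_right_mono[of 1 z x] x y z by simp_all
  consider "0 \<le> A" "0 \<le> B" | "A < 0" | "B < 0" by linarith
  then have "0 \<le> A * qx + B * qy"
  proof cases
    case 1
    then show ?thesis using pos by simp
  next
    case 2
    then have "y < x" "0 < B" using \<open>y < y * z\<close> \<open>x < z * x\<close> unfolding A_def B_def by linarith+
    then have "y\<^sup>2 \<le> x\<^sup>2" using y by (intro power_mono) auto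
    then have "0 \<le> tri_gram x y z * (x\<^sup>2 - y\<^sup>2)" using D by simp
    then have "(A * qx)\<^sup>2 \<le> (B * qy)\<^sup>2" using squares by linarith
    then have "\<bar>A * qx\<bar> \<le> B * qy" using \<open>0 < B\<close> pos by (simp add: power2_le_iff_abs_le)
    then show ?thesis by linarith
  next
    case 3
    then have "x < y" "0 < A" using \<open>y < y * z\<close> \<open>x < z * x\<close> unfolding A_def B_def by linarith+
    then have "x\<^sup>2 \<le> y\<^sup>2" using x by (intro power_mono) auto
    then have "tri_gram x y z * (x\<^sup>2 - y\<^sup>2) \<le> 0" using D by (simp add: mult_nonneg_nonpos)
    then have "(B * qy)\<^sup>2 \<le> (A * qx)\<^sup>2" using squares by linarith
    then have "\<bar>B * qy\<bar> \<le> A * qx" using \<open>0 < A\<close> pos by (simp add: power2_le_iff_abs_le)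
    then show ?thesis by linarith
  qed
  then show ?thesis by (simp add: A_def B_def qx_def qy_def)
qed

lemma cos_opposite_angle_add_nonneg:
  assumes x: "1 < x" and y: "1 < y" and z: "1 < z" and D: "0 \<le> tri_gram x y z"
  shows "0 \<le> cos (opposite_angle x y z) + cos (opposite_angle y z x)"
proof -
  define qx qy qz where "qx = sqrt (x\<^sup>2 - 1)" and "qy = sqrt (y\<^sup>2 - 1)" and "qz = sqrt (z\<^sup>2 - 1)"
  have pos: "0 < qx" "0 < qy" "0 < qz" using x y z by (simp_all add: qx_def qy_def qz_def)
  have "cos (opposite_angle x y z) + cos (opposite_angle y z x)
      = ((y * z - x) * qx + (z * x - y) * qy) / (qx * qy * qz)"
    unfolding cos_sin_opposite_angles(1,3)[OF x y z D, folded qx_def qy_def qz_def]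
    using pos by (simp add: field_simps)
  then show ?thesis
    using cosh_law_numerators_add_nonneg[OF x y z D, folded qx_def qy_def] pos by simp
qed

lemma opposite_angle_sum_le_pi:
  assumes x: "1 < x" and y: "1 < y" and z: "1 < z" and D: "0 \<le> tri_gram x y z"
  shows "opposite_angle x y z + opposite_angle y z x + opposite_angle z x y \<le> pi"
proof -
  define \<alpha> \<beta> \<gamma> where "\<alpha> = opposite_angle x y z" and "\<beta> = opposite_angle y z x"
    and "\<gamma> = opposite_angle z x y"
  have D': "0 \<le> tri_gram y z x" "0 \<le> tri_gram z x y" using D by (simp_all add: tri_gram_rotate)
  have bounds: "0 \<le> \<alpha>" "\<alpha> \<le> pi" "0 \<le> \<beta>" "\<beta> \<le> pi" "0 \<le> \<gamma>" "\<gamma> \<le> pi"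
    unfolding \<alpha>_def \<beta>_def \<gamma>_def
    using opposite_angle_bounds[OF y z D] opposite_angle_bounds[OF z x D'(1)]
      opposite_angle_bounds[OF x y D'(2)] by simp_all
  have "cos (pi - \<beta>) \<le> cos \<alpha>"
    using cos_opposite_angle_add_nonneg[OF x y z D] by (simp add: \<alpha>_def \<beta>_def)
  then have "\<alpha> + \<beta> \<le> pi" using cos_mono_le_eq[of "pi - \<beta>" \<alpha>] bounds by simp
  define qx qy qz r
    where "qx = sqrt (x\<^sup>2 - 1)" and "qy = sqrt (y\<^sup>2 - 1)" and "qz = sqrt (z\<^sup>2 - 1)"
      and "r = sqrt (tri_gram x y z)"
  have sq: "qz\<^sup>2 = z\<^sup>2 - 1" "r\<^sup>2 = tri_gram x y z" and pos: "0 < qx" "0 < qy" "0 < qz"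
    using x y z D by (simp_all add: qx_def qy_def qz_def r_def)
  note angles = cos_sin_opposite_angles[OF x y z D, folded qx_def qy_def qz_def r_def \<alpha>_def \<beta>_def \<gamma>_def]
  have "cos \<gamma> - cos (pi - (\<alpha> + \<beta>))
      = ((x * y - z) * qz\<^sup>2 + (y * z - x) * (z * x - y) - r\<^sup>2) / (qx * qy * qz\<^sup>2)"
    unfolding cos_pi_minus cos_add angles using pos
    by (simp add: field_simps) (simp add: power2_eq_square algebra_simps)
  also have "\<dots> = (z - 1) * tri_gram x y z / (qx * qy * qz\<^sup>2)"
    unfolding sq tri_gram_def by (simp add: power2_eq_square algebra_simps)
  also have "\<dots> \<ge> 0" using z D pos by simp
  finally have "cos (pi - (\<alpha> + \<beta>)) \<le> cos \<gamma>" by simp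
  then have "\<gamma> \<le> pi - (\<alpha> + \<beta>)"
    using cos_mono_le_eq[of "pi - (\<alpha> + \<beta>)" \<gamma>] bounds \<open>\<alpha> + \<beta> \<le> pi\<close> by simp
  then show ?thesis by (simp add: \<alpha>_def \<beta>_def \<gamma>_def)
qed

lemma mink_gdir:
  assumes "p \<in> hyp3" and "q \<in> hyp3" and "r \<in> hyp3"
  shows "mink (gdir p q) (gdir p r)
    = (mink q r + mink p q * mink p r) / (sqrt ((mink p q)\<^sup>2 - 1) * sqrt ((mink p r)\<^sup>2 - 1))"
proof -
  have "lnorm (tangent_proj p s) = sqrt ((mink p s)\<^sup>2 - 1)" if "s \<in> hyp3" for s
    using that mink_tangent_proj[OF assms(1), of s s]
    by (simp add: lnorm_def hyp3_mink_self power2_eq_square)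
  then have "gdir p s = (1 / sqrt ((mink p s)\<^sup>2 - 1)) *\<^sub>R tangent_proj p s" if "s \<in> hyp3" for s
    using that by (simp add: gdir_def tangent_proj_def)
  then show ?thesis
    using assms by (simp add: mink_tangent_proj)
qed

lemma tri_area_eq_angle_defect:
  fixes a b c :: mpt
  defines "x \<equiv> - mink b c" and "y \<equiv> - mink a c" and "z \<equiv> - mink a b"
  assumes "a \<in> hyp3" and "b \<in> hyp3" and "c \<in> hyp3"
    and "a \<noteq> b" and "b \<noteq> c" and "a \<noteq> c"
  shows "tri_area a b c = pi - (opposite_angle x y z + opposite_angle y z x + opposite_angle z x y)"
proof -
  have "angle_at a b c = opposite_angle x y z" "angle_at b c a = opposite_angle y z x"
    "angle_at c a b = opposite_angle z x y"
    using assms(4-6)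
    by (simp_all add: angle_at_def opposite_angle_def mink_gdir x_def y_def z_def
        mink_commute[of b a] mink_commute[of c a] mink_commute[of c b] algebra_simps)
  with assms(7-9) show ?thesis by (simp add: tri_area_def)
qed

lemma tri_gram_nonneg:
  assumes "a \<in> hyp3" and "b \<in> hyp3" and "c \<in> hyp3"
  shows "0 \<le> tri_gram (- mink b c) (- mink a c) (- mink a b)"
proof -
  have "(mink (tangent_proj a b) (tangent_proj a c))\<^sup>2
      \<le> mink (tangent_proj a b) (tangent_proj a b) * mink (tangent_proj a c) (tangent_proj a c)"
    using assms(1) tangent_proj_tangent by (intro tangent_mink_cauchy_schwarz)
  then have "((- mink a c) * (- mink a b) - (- mink b c))\<^sup>2
      \<le> ((- mink a c)\<^sup>2 - 1) * ((- mink a b)\<^sup>2 - 1)"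
    using assms by (simp add: mink_tangent_proj hyp3_mink_self power2_eq_square algebra_simps)
  then show ?thesis
    using cosh_law_square[of "- mink a c" "- mink a b" "- mink b c"] by linarith
qed

lemma mink_ptrans_holonomy:
  fixes a b c v :: mpt
  defines "x \<equiv> - mink b c" and "y \<equiv> - mink a c" and "z \<equiv> - mink a b"
  assumes a: "a \<in> hyp3" and b: "b \<in> hyp3" and c: "c \<in> hyp3" and v: "v \<in> tangent a"
  shows "mink (ptrans a b v) (ptrans c b (ptrans a c v)) = mink v v
    - ((y\<^sup>2 - 1) * (mink b v)\<^sup>2 - 2 * (y * z - x) * mink b v * mink c v + (z\<^sup>2 - 1) * (mink c v)\<^sup>2)
      / ((1 + x) * (1 + y) * (1 + z))"
proof -
  define \<beta> \<gamma> where "\<beta> = mink b v" and "\<gamma> = mink c v"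
  have gram: "mink a a = -1" "mink b b = -1" "mink c c = -1"
    "mink a b = -z" "mink b a = -z" "mink a c = -y" "mink c a = -y" "mink b c = -x" "mink c b = -x"
    "mink a v = 0" "mink v a = 0" "mink b v = \<beta>" "mink v b = \<beta>" "mink c v = \<gamma>" "mink v c = \<gamma>"
    using a b c v
    by (simp_all add: x_def y_def z_def \<beta>_def \<gamma>_def hyp3_mink_self tangent_def
        mink_commute[of b a] mink_commute[of c a] mink_commute[of c b]
        mink_commute[of v a] mink_commute[of v b] mink_commute[of v c])
  have "1 + x \<noteq> 0" "1 + y \<noteq> 0" "1 + z \<noteq> 0"
    using hyp3_mink_le[OF b c] hyp3_mink_le[OF a c] hyp3_mink_le[OF a b]
    by (simp_all add: x_def y_def z_def)
  define k1 k2 k3 where "k1 = \<beta> / (1 + z)" and "k2 = \<gamma> / (1 + y)"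
    and "k3 = (\<beta> - k2 * (z + x)) / (1 + x)"
  have "ptrans a b v = v + k1 *\<^sub>R (a + b)"
    by (simp add: ptrans_def gram \<beta>_def[symmetric] k1_def)
  moreover have "ptrans a c v = v + k2 *\<^sub>R (a + c)"
    by (simp add: ptrans_def gram \<gamma>_def[symmetric] k2_def)
  moreover have "ptrans c b (v + k2 *\<^sub>R (a + c)) = v + k2 *\<^sub>R (a + c) + k3 *\<^sub>R (c + b)"
    by (simp add: ptrans_def gram \<beta>_def[symmetric] k3_def algebra_simps)
  ultimately have "mink (ptrans a b v) (ptrans c b (ptrans a c v))
      = mink v v + (k2 + k3) * \<gamma> + k3 * \<beta> + k1 * (- k2 - (k2 + k3) * y - k3 * z)
        + k1 * (\<beta> - k2 * z - (k2 + k3) * x - k3)"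
    by (simp add: gram algebra_simps)
  also have "\<dots> = mink v v - ((y\<^sup>2 - 1) * \<beta>\<^sup>2 - 2 * (y * z - x) * \<beta> * \<gamma> + (z\<^sup>2 - 1) * \<gamma>\<^sup>2)
      / ((1 + x) * (1 + y) * (1 + z))"
  proof -
    \<comment> \<open>\<open>field_simps\<close> clears the denominators only once they are atoms.\<close>
    obtain X Y Z where XYZ: "x = X - 1" "y = Y - 1" "z = Z - 1" and "X \<noteq> 0" "Y \<noteq> 0" "Z \<noteq> 0"
      using \<open>1 + x \<noteq> 0\<close> \<open>1 + y \<noteq> 0\<close> \<open>1 + z \<noteq> 0\<close> by (metis add_diff_cancel_left')
    then show ?thesis unfolding k3_def k1_def k2_def XYZ
      by (simp add: field_simps) (simp add: power2_eq_square algebra_simps)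
  qed
  finally show ?thesis by (simp add: \<beta>_def \<gamma>_def)
qed

lemma holonomy_form_le:
  fixes a b c v :: mpt
  defines "x \<equiv> - mink b c" and "y \<equiv> - mink a c" and "z \<equiv> - mink a b"
  assumes a: "a \<in> hyp3" and b: "b \<in> hyp3" and c: "c \<in> hyp3" and v: "v \<in> tangent a"
  shows "(y\<^sup>2 - 1) * (mink b v)\<^sup>2 - 2 * (y * z - x) * mink b v * mink c v + (z\<^sup>2 - 1) * (mink c v)\<^sup>2
    \<le> tri_gram x y z * mink v v"
proof -
  define b' c' where "b' = tangent_proj a b" and "c' = tangent_proj a c"
  have "mink b' b' = z\<^sup>2 - 1" "mink c' c' = y\<^sup>2 - 1" "mink b' c' = y * z - x"
    using a b c
    by (simp_all add: b'_def c'_def x_def y_def z_def mink_tangent_proj hyp3_mink_self power2_eq_square)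
  moreover have "mink v b' = mink b v" "mink c' v = mink c v"
    using v by (simp_all add: b'_def c'_def tangent_proj_def tangent_def
        mink_commute[of v a] mink_commute[of v b])
  moreover have "0 \<le> mink v v * mink b' b' * mink c' c' + 2 * mink v b' * mink b' c' * mink c' v
      - mink v v * (mink b' c')\<^sup>2 - mink b' b' * (mink c' v)\<^sup>2 - mink c' c' * (mink v b')\<^sup>2"
    unfolding b'_def c'_def using a v tangent_proj_tangent by (intro tangent_gram_det_nonneg)
  ultimately have "0 \<le> mink v v * (z\<^sup>2 - 1) * (y\<^sup>2 - 1) + 2 * mink b v * (y * z - x) * mink c v
      - mink v v * (y * z - x)\<^sup>2 - (z\<^sup>2 - 1) * (mink c v)\<^sup>2 - (y\<^sup>2 - 1) * (mink b v)\<^sup>2"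
    by simp
  moreover have "tri_gram x y z * mink v v
      - ((y\<^sup>2 - 1) * (mink b v)\<^sup>2 - 2 * (y * z - x) * mink b v * mink c v + (z\<^sup>2 - 1) * (mink c v)\<^sup>2)
    = mink v v * (z\<^sup>2 - 1) * (y\<^sup>2 - 1) + 2 * mink b v * (y * z - x) * mink c v
      - mink v v * (y * z - x)\<^sup>2 - (z\<^sup>2 - 1) * (mink c v)\<^sup>2 - (y\<^sup>2 - 1) * (mink b v)\<^sup>2"
    by (simp add: tri_gram_def power2_eq_square algebra_simps)
  ultimately show ?thesis by linarith
qed

lemma one_minus_cos_le: "1 - cos x \<le> x\<^sup>2 / 2" for x :: real
proof -
  have "\<bar>sin (x / 2)\<bar> \<le> \<bar>x / 2\<bar>" by (rule abs_sin_x_le_abs_x)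
  then have "(sin (x / 2))\<^sup>2 \<le> (x / 2)\<^sup>2" by (simp only: abs_le_square_iff)
  then show ?thesis using cos_double_sin[of "x / 2"] by (simp add: power_divide)
qed

lemma ptrans_holonomy_degenerate:
  assumes a: "a \<in> hyp3" and c: "c \<in> hyp3" and v: "v \<in> tangent a"
    and "a = b \<or> b = c \<or> a = c"
  shows "ptrans c b (ptrans a c v) = ptrans a b v"
  using assms(4)
proof (elim disjE)
  assume "a = b"
  then show ?thesis using ptrans_ptrans[OF a c v] v by (simp add: ptrans_self)
next
  assume "b = c"
  then show ?thesis using ptrans_tangent[OF a c] by (simp add: ptrans_self)
next
  assume "a = c"
  then show ?thesis using v by (simp add: ptrans_self)
qed

lemma mink_holonomy_defect:
  fixes a b c v :: mpt
  defines "x \<equiv> - mink b c" and "y \<equiv> - mink a c" and "z \<equiv> - mink a b"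
    and "u \<equiv> ptrans a b v" and "w \<equiv> ptrans c b (ptrans a c v)"
  assumes a: "a \<in> hyp3" and b: "b \<in> hyp3" and c: "c \<in> hyp3" and v: "v \<in> tangent a"
  shows "mink (u - w) (u - w) = 2 * ((y\<^sup>2 - 1) * (mink b v)\<^sup>2 - 2 * (y * z - x) * mink b v * mink c v
    + (z\<^sup>2 - 1) * (mink c v)\<^sup>2) / ((1 + x) * (1 + y) * (1 + z))"
proof -
  have "mink u u = mink v v" "mink w w = mink v v"
    using mink_ptrans[OF a b v v] mink_ptrans[OF c b ptrans_tangent[OF a c] ptrans_tangent[OF a c]]
      mink_ptrans[OF a c v v] by (simp_all add: u_def w_def)
  then show ?thesis
    using mink_ptrans_holonomy[OF a b c v]
    by (simp add: u_def w_def x_def y_def z_def mink_commute[of "ptrans c b (ptrans a c v)" "ptrans a b v"]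
        diff_divide_distrib)
qed

lemma lnorm_holonomy_le_tri_area:
  assumes a: "a \<in> hyp3" and b: "b \<in> hyp3" and c: "c \<in> hyp3"
    and v: "v \<in> tangent a" and unit: "lnorm v = 1"
  shows "lnorm (ptrans a b v - ptrans c b (ptrans a c v)) \<le> tri_area a b c"
proof (cases "a = b \<or> b = c \<or> a = c")
  case True
  then show ?thesis by (simp add: ptrans_holonomy_degenerate[OF a c v] lnorm_def tri_area_def)
next
  case False
  define x y z where "x = - mink b c" and "y = - mink a c" and "z = - mink a b"
  define P where "P = (1 + x) * (1 + y) * (1 + z)"
  define A where "A = tri_area a b c"
  let ?d = "ptrans a b v - ptrans c b (ptrans a c v)"
  have x: "1 < x" and y: "1 < y" and z: "1 < z"
    using False hyp3_mink_less[OF b c] hyp3_mink_less[OF a c] hyp3_mink_less[OF a b]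
    by (auto simp: x_def y_def z_def)
  have D: "0 \<le> tri_gram x y z" unfolding x_def y_def z_def using a b c by (rule tri_gram_nonneg)
  have "mink v v = 1" using unit by (simp add: lnorm_def)
  have "0 < P" using x y z by (simp add: P_def)
  have A: "A = pi - (opposite_angle x y z + opposite_angle y z x + opposite_angle z x y)"
    using tri_area_eq_angle_defect[OF a b c] False by (simp add: A_def x_def y_def z_def)
  have "0 \<le> mink ?d ?d"
    using b ptrans_tangent[OF a b] ptrans_tangent[OF c b] by (intro tangent_mink_nonneg tangent_diff)
  then have "(lnorm ?d)\<^sup>2 = mink ?d ?d" by (simp add: lnorm_def)
  also have "\<dots> \<le> 2 * tri_gram x y z / P"
    using mink_holonomy_defect[OF a b c v] holonomy_form_le[OF a b c v] \<open>mink v v = 1\<close> \<open>0 < P\<close>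
    by (simp add: x_def y_def z_def P_def divide_right_mono)
  also have "\<dots> = 2 * (1 - cos A)"
    using cos_angle_defect[OF x y z D] \<open>0 < P\<close> by (simp add: A P_def)
  also have "\<dots> \<le> A\<^sup>2" using one_minus_cos_le[of A] by simp
  finally have "(lnorm ?d)\<^sup>2 \<le> A\<^sup>2" .
  moreover have "0 \<le> A" using opposite_angle_sum_le_pi[OF x y z D] by (simp add: A)
  ultimately show ?thesis unfolding A_def by (rule power2_le_imp_le)
qed

theorem lemma4:
  assumes "a \<in> hyp3" and "b \<in> hyp3" and "c \<in> hyp3"
    and "va \<in> tangent a" and "lnorm va = 1"
    and "vb \<in> tangent b" and "lnorm vb = 1"
  shows "lnorm (ptrans a b va - vb)
           \<le> tri_area a b c + lnorm (ptrans a c va - ptrans b c vb)"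
proof -
  let ?u = "ptrans a b va" and ?w = "ptrans c b (ptrans a c va)"
  have "?u \<in> tangent b" "?w \<in> tangent b" using assms(1-3) by (simp_all add: ptrans_tangent)
  then have "lnorm (?u - vb) \<le> lnorm (?u - ?w) + lnorm (?w - vb)"
    using lnorm_triangle[OF assms(2), of "?u - ?w" "?w - vb"] assms(6) by (simp add: tangent_diff)
  moreover have "lnorm (?u - ?w) \<le> tri_area a b c"
    using assms(1-5) by (rule lnorm_holonomy_le_tri_area)
  moreover have "?w - vb = ptrans c b (ptrans a c va - ptrans b c vb)"
    using ptrans_ptrans[OF assms(2,3,6)] by (simp add: ptrans_diff)
  then have "lnorm (?w - vb) = lnorm (ptrans a c va - ptrans b c vb)"
    using assms by (simp add: lnorm_def mink_ptrans ptrans_tangent tangent_diff)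
  ultimately show ?thesis by linarith
qed

end
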